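(* Assume $p_0\in(0,1)$, $p_j\in(0,1)$ and $\tau_j=\frac{p_0}{p_0+2(1-p_0)p_j}$ for $j=1,\dots,k$. Then for all $\Theta=(\theta_1,\dots,\theta_n)$ and $X=(x_1,\dots,x_n)$ in $\mathbb R^{nd}$, $$\mathbb E\|g-\nabla F(X)\|^2\le 2\mathcal L\, D_F(\Theta,X),$$ where $g=(g_1,\dots,g_n)$, the expectation is over $\xi$ and $(l_i)_{i}$, and $D_F(\Theta,X)=F(\Theta)-F(X)-\langle\nabla F(X),\Theta-X\rangle$.
   Context: Clients $1,\dots,n$ are partitioned into nonempty disjoint clusters $\mathcal I_1,\dots,\mathcal I_k$; $d\ge1$. Each $f_i(\theta)=\frac1{n_i}\sum_{l=1}^{n_i}\tilde f_{i,l}(\theta)$ where each $\tilde f_{i,l}:\mathbb R^d\to\mathbb R$ is $\tilde L$-smooth and $\mu$-strongly convex. Fix $\gamma_i>0$ and $\alpha_j\in[0,1]$, not all $\alpha_j=0$. For a vector $\Theta=(\theta_1,\dots,\theta_n)$ define $\bar\theta_j=\frac{\sum_{i\in\mathcal I_j}\gamma_i\theta_i}{\sum_{i\in\mathcal I_j}\gamma_i}$, $\bar\theta=\frac{\sum_{j}\sum_{i\in\mathcal I_j}\alpha_j\gamma_i\theta_i}{\sum_{j}\sum_{i\in\mathcal I_j}\alpha_j\gamma_i}$ (and analogously $\bar x_j,\bar x$ for $X$), and $F(\Theta)=\sum_{j}\sum_{i\in\mathcal I_j}\big(f_i(\theta_i)+\frac{(1-\alpha_j)\gamma_i}{2}\|\theta_i-\bar\theta_j\|^2+\frac{\alpha_j\gamma_i}{2}\|\theta_i-\bar\theta\|^2\big)$.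 Randomness: $\xi_0,\dots,\xi_k$ independent Bernoulli with $\mathbb P(\xi_j=1)=p_j$, and independently for each client $i$ an index $l_i$ uniform on $\{1,\dots,n_i\}$. For $i\in\mathcal I_j$: $$g_i=\nabla f_i(x_i)+\alpha_j\gamma_i(x_i-\bar x)+(1-\alpha_j)\gamma_i(x_i-\bar x_j)+\mathbf 1\{\xi_0=1\}\frac{\gamma_i\alpha_j}{p_0}\big(\theta_i-\bar\theta-(x_i-\bar x)\big)$$ $$+\mathbf 1\{\xi_0=0,\xi_j=1\}\frac{\gamma_i(1-\tau_j)(1-\alpha_j)}{(1-p_0)p_j}\big((\theta_i-\bar\theta_j)-(x_i-\bar x_j)\big)+\mathbf 1\{\xi_0=0,\xi_j=0\}\frac{1}{(1-p_0)(1-p_j)}\big(\nabla\tilde f_{i,l_i}(\theta_i)-\nabla\tilde f_{i,l_i}(x_i)\big).$$ Define $\mathcal L=\max\big\{\frac{2}{p_0}\max_{j}\max_{i\in\mathcal I_j}\alpha_j\gamma_i,\ \max_{j}\frac{2(1-\alpha_j)\max_{i\in\mathcal I_j}\gamma_i}{p_0+2(1-p_0)p_j},\ \frac{\tilde L}{1-p_0}\max_{j}\frac{1}{1-p_j}\big\}$. *)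

theory Defs
  imports "HOL-Analysis.Analysis"
begin

text \<open>Clients are indexed by a finite type 'n, clusters by a finite type 'k,
  parameters live in a Euclidean space 'a (playing the role of R^d).
  A stacked vector (theta_1,...,theta_n) is an element of 'a^'n.
  cl i is the cluster of client i; N i = n_i is the number of local samples;
  ft i l is the l-th local function of client i (l in 1..N i), gt i l its gradient.\<close>

definition loc_f :: "('n \<Rightarrow> nat) \<Rightarrow> ('n \<Rightarrow> nat \<Rightarrow> 'a \<Rightarrow> real) \<Rightarrow> 'n \<Rightarrow> 'a \<Rightarrow> real" where
  "loc_f N ft i x = (\<Sum>l = 1..N i. ft i l x) / real (N i)"

definition loc_grad :: "('n \<Rightarrow> nat) \<Rightarrow> ('n \<Rightarrow> nat \<Rightarrow> 'a \<Rightarrow> 'a) \<Rightarrow> 'n \<Rightarrow> 'a \<Rightarrow> 'a::real_vector" where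
  "loc_grad N gt i x = (\<Sum>l = 1..N i. gt i l x) /\<^sub>R real (N i)"

definition clavg :: "('n::finite \<Rightarrow> 'k) \<Rightarrow> ('n \<Rightarrow> real) \<Rightarrow> ('a::real_vector)^'n \<Rightarrow> 'k \<Rightarrow> 'a" where
  "clavg cl \<gamma> \<Theta> j = (\<Sum>i\<in>{i. cl i = j}. \<gamma> i *\<^sub>R (\<Theta> $ i)) /\<^sub>R (\<Sum>i\<in>{i. cl i = j}. \<gamma> i)"

definition gavg :: "('n::finite \<Rightarrow> 'k) \<Rightarrow> ('k \<Rightarrow> real) \<Rightarrow> ('n \<Rightarrow> real) \<Rightarrow> ('a::real_vector)^'n \<Rightarrow> 'a" where
  "gavg cl \<alpha> \<gamma> \<Theta> = (\<Sum>i\<in>UNIV. (\<alpha> (cl i) * \<gamma> i) *\<^sub>R (\<Theta> $ i)) /\<^sub>R (\<Sum>i\<in>UNIV. \<alpha> (cl i) * \<gamma> i)"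

definition Fobj :: "('n::finite \<Rightarrow> nat) \<Rightarrow> ('n \<Rightarrow> nat \<Rightarrow> 'a \<Rightarrow> real) \<Rightarrow> ('n \<Rightarrow> 'k)
    \<Rightarrow> ('k \<Rightarrow> real) \<Rightarrow> ('n \<Rightarrow> real) \<Rightarrow> ('a::real_normed_vector)^'n \<Rightarrow> real" where
  "Fobj N ft cl \<alpha> \<gamma> \<Theta> = (\<Sum>i\<in>UNIV.
      loc_f N ft i (\<Theta> $ i)
      + (1 - \<alpha> (cl i)) * \<gamma> i / 2 * (norm (\<Theta> $ i - clavg cl \<gamma> \<Theta> (cl i)))\<^sup>2
      + \<alpha> (cl i) * \<gamma> i / 2 * (norm (\<Theta> $ i - gavg cl \<alpha> \<gamma> \<Theta>))\<^sup>2)"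

definition tau :: "real \<Rightarrow> ('k \<Rightarrow> real) \<Rightarrow> 'k \<Rightarrow> real" where
  "tau p0 p j = p0 / (p0 + 2 * (1 - p0) * p j)"

text \<open>the stochastic estimator g = (g_1,...,g_n) for a realisation
  (xi0, xi, l) of the randomness (xi j = xi_j for clusters j, l i = l_i)\<close>
definition gest :: "('n::finite \<Rightarrow> nat) \<Rightarrow> ('n \<Rightarrow> nat \<Rightarrow> 'a \<Rightarrow> 'a) \<Rightarrow> ('n \<Rightarrow> 'k)
    \<Rightarrow> ('k \<Rightarrow> real) \<Rightarrow> ('n \<Rightarrow> real) \<Rightarrow> real \<Rightarrow> ('k \<Rightarrow> real)
    \<Rightarrow> ('a::real_vector)^'n \<Rightarrow> 'a^'n \<Rightarrow> bool \<Rightarrow> ('k \<Rightarrow> bool) \<Rightarrow> ('n \<Rightarrow> nat) \<Rightarrow> 'a^'n" where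
  "gest N gt cl \<alpha> \<gamma> p0 p \<Theta> X \<xi>0 \<xi> l = (\<chi> i.
      loc_grad N gt i (X $ i)
      + (\<alpha> (cl i) * \<gamma> i) *\<^sub>R (X $ i - gavg cl \<alpha> \<gamma> X)
      + ((1 - \<alpha> (cl i)) * \<gamma> i) *\<^sub>R (X $ i - clavg cl \<gamma> X (cl i))
      + (if \<xi>0 then (\<gamma> i * \<alpha> (cl i) / p0) *\<^sub>R
            ((\<Theta> $ i - gavg cl \<alpha> \<gamma> \<Theta>) - (X $ i - gavg cl \<alpha> \<gamma> X)) else 0)
      + (if \<not> \<xi>0 \<and> \<xi> (cl i) then
            (\<gamma> i * (1 - tau p0 p (cl i)) * (1 - \<alpha> (cl i)) / ((1 - p0) * p (cl i))) *\<^sub>R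
            ((\<Theta> $ i - clavg cl \<gamma> \<Theta> (cl i)) - (X $ i - clavg cl \<gamma> X (cl i))) else 0)
      + (if \<not> \<xi>0 \<and> \<not> \<xi> (cl i) then
            (1 / ((1 - p0) * (1 - p (cl i)))) *\<^sub>R (gt i (l i) (\<Theta> $ i) - gt i (l i) (X $ i)) else 0))"

text \<open>Expectation over independent xi_0 ~ Bernoulli(p0), xi_j ~ Bernoulli(p j),
  and independent l_i uniform on {1..N i}, written as an explicit finite sum.\<close>
definition expect :: "('n::finite \<Rightarrow> nat) \<Rightarrow> real \<Rightarrow> ('k::finite \<Rightarrow> real)
    \<Rightarrow> (bool \<Rightarrow> ('k \<Rightarrow> bool) \<Rightarrow> ('n \<Rightarrow> nat) \<Rightarrow> real) \<Rightarrow> real" where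
  "expect N p0 p Z = (\<Sum>\<xi>0\<in>(UNIV::bool set). \<Sum>\<xi>\<in>(UNIV::('k \<Rightarrow> bool) set).
      \<Sum>l\<in>PiE UNIV (\<lambda>i. {1..N i}).
        (if \<xi>0 then p0 else 1 - p0) * (\<Prod>j\<in>UNIV. if \<xi> j then p j else 1 - p j)
        * (\<Prod>i\<in>UNIV. 1 / real (N i)) * Z \<xi>0 \<xi> l)"

definition Lconst :: "('n::finite \<Rightarrow> 'k::finite) \<Rightarrow> ('k \<Rightarrow> real) \<Rightarrow> ('n \<Rightarrow> real) \<Rightarrow> real
    \<Rightarrow> ('k \<Rightarrow> real) \<Rightarrow> real \<Rightarrow> real" where
  "Lconst cl \<alpha> \<gamma> p0 p Lt = max (max
      (2 / p0 * Max (range (\<lambda>j. Max ((\<lambda>i. \<alpha> j * \<gamma> i) ` {i. cl i = j}))))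
      (Max (range (\<lambda>j. 2 * (1 - \<alpha> j) * Max (\<gamma> ` {i. cl i = j}) / (p0 + 2 * (1 - p0) * p j)))))
      (Lt / (1 - p0) * Max (range (\<lambda>j. 1 / (1 - p j))))"

end

theory Submission
  imports Defs
begin

text \<open>Write A and B for the global and the cluster deviation of \<open>\<Theta> - X\<close> at client i,
  in cluster j. The squared error of g splits over the clients, and for client i the randomness
  enters only through \<open>\<xi>0\<close>, \<open>\<xi> j\<close> and \<open>l i\<close>, with exactly one correction term active. Hence its
  expected squared error is \<open>p0 c1\<^sup>2 |A|\<^sup>2 + (1-p0) p\<^sub>j c2\<^sup>2 |B|\<^sup>2 + (1-p0)(1-p\<^sub>j) c3\<^sup>2 V\<close>, with c1, c2, c3 the
  coefficients of the correction terms and V the mean over l of the squared gradient differences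
  of the local functions. Since F is a separable
  part plus a quadratic form in the linear deviations, its Bregman divergence splits per client
  as the local Bregman divergence plus \<open>(1-\<alpha>\<^sub>j)\<gamma>\<^sub>i/2 |B|\<^sup>2 + \<alpha>\<^sub>j\<gamma>\<^sub>i/2 |A|\<^sup>2\<close>. The first two error
  terms are matched coefficientwise by the first two entries of the constant, and V is
  controlled by co-coercivity of smooth convex functions, \<open>|\<nabla>f y - \<nabla>f x|\<^sup>2 \<le> 2L D\<^sub>f(x,y)\<close>,
  which together with the third entry bounds the last term.\<close>

section \<open>Smooth convex functions\<close>

definition bregman :: "('a::real_inner \<Rightarrow> real) \<Rightarrow> ('a \<Rightarrow> 'a) \<Rightarrow> 'a \<Rightarrow> 'a \<Rightarrow> real" where
  "bregman f g x y = f y - f x - g x \<bullet> (y - x)"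

lemma lipschitz_const_nonneg:
  fixes g :: "'a::euclidean_space \<Rightarrow> 'b::real_normed_vector"
  assumes "\<And>x y. norm (g x - g y) \<le> L * norm (x - y)"
  shows "L \<ge> 0"
proof -
  obtain b :: 'a where "b \<in> Basis" using nonempty_Basis by blast
  then have "norm (b - 0) > 0" by (auto simp: nonzero_Basis)
  moreover have "0 \<le> L * norm (b - 0)" using assms[of b 0] norm_ge_zero order_trans by blast
  ultimately show ?thesis by (simp add: zero_le_mult_iff)
qed

lemma smooth_quadratic_upper_bound:
  fixes f :: "'a::euclidean_space \<Rightarrow> real" and g :: "'a \<Rightarrow> 'a"
  assumes deriv: "\<And>x. (f has_derivative (\<lambda>h. g x \<bullet> h)) (at x)"
    and lipschitz: "\<And>x y. norm (g x - g y) \<le> L * norm (x - y)"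
  shows "f z \<le> f y + g y \<bullet> (z - y) + L / 2 * (norm (z - y))\<^sup>2"
proof -
  define \<phi> where "\<phi> t = f (y + t *\<^sub>R (z - y)) - t * (g y \<bullet> (z - y)) - L / 2 * t\<^sup>2 * (norm (z - y))\<^sup>2" for t
  define \<phi>' where "\<phi>' t = (g (y + t *\<^sub>R (z - y)) - g y) \<bullet> (z - y) - L * t * (norm (z - y))\<^sup>2" for t
  have deriv_\<phi>: "DERIV \<phi> t :> \<phi>' t" for t
  proof -
    have "((\<lambda>t. y + t *\<^sub>R (z - y)) has_derivative (\<lambda>s. s *\<^sub>R (z - y))) (at t)"
      by (auto intro!: derivative_eq_intros)
    from has_derivative_compose[OF this deriv]
    have "((\<lambda>t. f (y + t *\<^sub>R (z - y))) has_field_derivative g (y + t *\<^sub>R (z - y)) \<bullet> (z - y)) (at t)"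
      unfolding has_field_derivative_def by (simp add: mult.commute[of _ "g _ \<bullet> _"])
    then show ?thesis
      unfolding \<phi>_def \<phi>'_def by (auto intro!: derivative_eq_intros simp: inner_diff_left)
  qed
  have \<phi>'_nonpos: "\<phi>' t \<le> 0" if "0 \<le> t" for t
  proof -
    have "(g (y + t *\<^sub>R (z - y)) - g y) \<bullet> (z - y) \<le> norm (g (y + t *\<^sub>R (z - y)) - g y) * norm (z - y)"
      by (rule norm_cauchy_schwarz)
    also have "\<dots> \<le> L * norm (t *\<^sub>R (z - y)) * norm (z - y)"
      using lipschitz[of "y + t *\<^sub>R (z - y)" y] by (intro mult_right_mono) auto
    also have "\<dots> = L * t * (norm (z - y))\<^sup>2" using that by (simp add: power2_eq_square)
    finally show ?thesis unfolding \<phi>'_def by simp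
  qed
  obtain t where "0 < t" "\<phi> 1 - \<phi> 0 = \<phi>' t"
    using MVT2[of 0 1 \<phi> \<phi>'] deriv_\<phi> by auto
  with \<phi>'_nonpos[of t] have "\<phi> 1 \<le> \<phi> 0" by simp
  then show ?thesis unfolding \<phi>_def by simp
qed

text \<open>Co-coercivity: test the convexity inequality at the gradient step z = y - (g y - g x) / L from y.\<close>
lemma smooth_convex_grad_diff_sq_le_bregman:
  fixes f :: "'a::euclidean_space \<Rightarrow> real" and g :: "'a \<Rightarrow> 'a"
  assumes deriv: "\<And>x. (f has_derivative (\<lambda>h. g x \<bullet> h)) (at x)"
    and lipschitz: "\<And>x y. norm (g x - g y) \<le> L * norm (x - y)"
    and convex: "\<And>x y. bregman f g x y \<ge> 0"
  shows "(norm (g y - g x))\<^sup>2 \<le> 2 * L * bregman f g x y"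
proof (cases "L = 0")
  case True
  then show ?thesis using lipschitz[of y x] convex[of x y] by simp
next
  case False
  with lipschitz_const_nonneg[OF lipschitz] have L: "L > 0" by simp
  define d where "d = g y - g x"
  define z where "z = y - (1 / L) *\<^sub>R d"
  have "0 \<le> bregman f g x z" by (rule convex)
  moreover have "f z \<le> f y + g y \<bullet> (z - y) + L / 2 * (norm (z - y))\<^sup>2"
    by (rule smooth_quadratic_upper_bound[OF deriv lipschitz])
  moreover have "g y \<bullet> (z - y) = g x \<bullet> (z - y) + d \<bullet> (z - y)"
    unfolding d_def by (simp add: inner_diff_left)
  moreover have "d \<bullet> (z - y) = - (norm d)\<^sup>2 / L"
    unfolding z_def by (simp add: power2_norm_eq_inner)
  moreover have "L / 2 * (norm (z - y))\<^sup>2 = (norm d)\<^sup>2 / (2 * L)"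
    unfolding z_def using L by (simp add: power2_eq_square)
  moreover have "g x \<bullet> (z - x) = g x \<bullet> (y - x) + g x \<bullet> (z - y)"
    by (simp add: inner_diff_right)
  moreover have "(norm d)\<^sup>2 / L = 2 * ((norm d)\<^sup>2 / (2 * L))"
    by simp
  ultimately have "(norm d)\<^sup>2 / (2 * L) \<le> bregman f g x y"
    unfolding bregman_def by linarith
  then show ?thesis using L unfolding d_def by (simp add: field_simps)
qed

lemma norm_diff_sq_eq:
  fixes u v :: "'a::real_inner"
  shows "(norm (u - v))\<^sup>2 = (norm u)\<^sup>2 - (norm v)\<^sup>2 - 2 * (v \<bullet> (u - v))"
  by (simp add: power2_norm_eq_inner inner_diff_left inner_diff_right inner_commute[of u v])

section \<open>Sampling the coordinates independently\<close>

lemma sum_PiE_prod_mult_coord: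
  fixes w :: "'k::finite \<Rightarrow> 'b \<Rightarrow> real" and h :: "'b \<Rightarrow> real"
  assumes "\<And>k. finite (B k)" and "\<And>k. k \<noteq> j \<Longrightarrow> (\<Sum>b\<in>B k. w k b) = 1"
  shows "(\<Sum>f\<in>PiE UNIV B. (\<Prod>k\<in>UNIV. w k (f k)) * h (f j)) = (\<Sum>b\<in>B j. w j b * h b)"
proof -
  define w' where "w' k b = w k b * (if k = j then h b else 1)" for k b
  have "(\<Prod>k\<in>UNIV. w k (f k)) * h (f j) = (\<Prod>k\<in>UNIV. w' k (f k))" for f :: "'k \<Rightarrow> 'b"
    by (simp add: w'_def prod.distrib prod.delta)
  then have "(\<Sum>f\<in>PiE UNIV B. (\<Prod>k\<in>UNIV. w k (f k)) * h (f j)) = (\<Prod>k\<in>UNIV. \<Sum>b\<in>B k. w' k b)"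
    by (simp add: prod_sum_PiE assms(1))
  also have "\<dots> = (\<Prod>k\<in>UNIV. if k = j then (\<Sum>b\<in>B j. w j b * h b) else 1)"
    by (rule prod.cong) (auto simp: w'_def assms(2))
  finally show ?thesis by (simp add: prod.delta)
qed

lemma expect_marginal:
  fixes N :: "'n::finite \<Rightarrow> nat" and p :: "'k::finite \<Rightarrow> real"
  assumes "\<And>i. N i \<ge> 1"
  shows "expect N p0 p (\<lambda>\<xi>0 \<xi> l. H \<xi>0 (\<xi> j) (l i)) =
    (\<Sum>b0\<in>UNIV. (if b0 then p0 else 1 - p0) * (\<Sum>b\<in>UNIV. (if b then p j else 1 - p j) *
        ((\<Sum>m = 1..N i. H b0 b m) / real (N i))))" (is "_ = ?rhs")
proof -
  have sample: "(\<Sum>l\<in>PiE UNIV (\<lambda>i. {1..N i}). (\<Prod>k\<in>UNIV. 1 / real (N k)) * h (l i))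
      = (\<Sum>m = 1..N i. h m) / real (N i)" for h :: "nat \<Rightarrow> real"
  proof -
    have "(\<Sum>l\<in>PiE UNIV (\<lambda>i. {1..N i}). (\<Prod>k\<in>UNIV. 1 / real (N k)) * h (l i))
        = (\<Sum>m = 1..N i. 1 / real (N i) * h m)"
      by (rule sum_PiE_prod_mult_coord) (use assms in \<open>auto simp: Suc_le_eq\<close>)
    then show ?thesis by (simp add: sum_divide_distrib)
  qed
  have cluster: "(\<Sum>\<xi>\<in>UNIV. (\<Prod>k\<in>UNIV. if \<xi> k then p k else 1 - p k) * h (\<xi> j))
      = (\<Sum>b\<in>UNIV. (if b then p j else 1 - p j) * h b)" for h :: "bool \<Rightarrow> real"
  proof -
    have "(\<Sum>\<xi>\<in>PiE UNIV (\<lambda>_. UNIV). (\<Prod>k\<in>UNIV. if \<xi> k then p k else 1 - p k) * h (\<xi> j))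
      = (\<Sum>b\<in>UNIV. (if b then p j else 1 - p j) * h b)"
      by (rule sum_PiE_prod_mult_coord) (auto simp: UNIV_bool)
    then show ?thesis by simp
  qed
  have "expect N p0 p (\<lambda>\<xi>0 \<xi> l. H \<xi>0 (\<xi> j) (l i)) =
     (\<Sum>\<xi>0\<in>UNIV. (if \<xi>0 then p0 else 1 - p0) * (\<Sum>\<xi>\<in>UNIV.
        (\<Prod>k\<in>UNIV. if \<xi> k then p k else 1 - p k) *
        (\<Sum>l\<in>PiE UNIV (\<lambda>i. {1..N i}). (\<Prod>k\<in>UNIV. 1 / real (N k)) * H \<xi>0 (\<xi> j) (l i))))"
    unfolding expect_def by (simp add: sum_distrib_left mult_ac)
  also have "\<dots> = (\<Sum>\<xi>0\<in>UNIV. (if \<xi>0 then p0 else 1 - p0) * (\<Sum>\<xi>\<in>UNIV.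
        (\<Prod>k\<in>UNIV. if \<xi> k then p k else 1 - p k) * ((\<Sum>m = 1..N i. H \<xi>0 (\<xi> j) m) / real (N i))))"
    by (simp only: sample)
  also have "\<dots> = ?rhs"
    by (simp only: cluster[where h = "\<lambda>b. (\<Sum>m = 1..N i. H _ b m) / real (N i)"])
  finally show ?thesis .
qed

lemma expect_client_cases:
  fixes N :: "'n::finite \<Rightarrow> nat" and p :: "'k::finite \<Rightarrow> real"
  assumes "\<And>i. N i \<ge> 1"
  shows "expect N p0 p (\<lambda>\<xi>0 \<xi> l. if \<xi>0 then a else if \<xi> j then b else c (l i)) =
    p0 * a + (1 - p0) * (p j * b + (1 - p j) * ((\<Sum>m = 1..N i. c m) / real (N i)))"
proof -
  have "expect N p0 p (\<lambda>\<xi>0 \<xi> l. if \<xi>0 then a else if \<xi> j then b else c (l i)) =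
    (\<Sum>b0\<in>UNIV. (if b0 then p0 else 1 - p0) * (\<Sum>\<beta>\<in>UNIV. (if \<beta> then p j else 1 - p j) *
        ((\<Sum>m = 1..N i. if b0 then a else if \<beta> then b else c m) / real (N i))))"
    by (rule expect_marginal[OF assms])
  also have "\<dots> = p0 * a + (1 - p0) * (p j * b + (1 - p j) * ((\<Sum>m = 1..N i. c m) / real (N i)))"
    using assms[of i] by (simp add: UNIV_bool field_simps)
  finally show ?thesis .
qed

lemma expect_sum:
  fixes N :: "'n::finite \<Rightarrow> nat" and p :: "'k::finite \<Rightarrow> real"
  shows "expect N p0 p (\<lambda>\<xi>0 \<xi> l. \<Sum>i\<in>(UNIV::'n set). Z i \<xi>0 \<xi> l) = (\<Sum>i\<in>UNIV. expect N p0 p (Z i))"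
  unfolding expect_def by (simp add: sum_distrib_left sum.swap[of _ "UNIV::'n set"])

section \<open>Gradient and Bregman divergence of the objective\<close>

lemma sum_scaleR_deviation_wavg_eq_0:
  fixes c :: "'i \<Rightarrow> real" and X :: "'i \<Rightarrow> 'a::real_vector"
  assumes "finite S" and "\<And>i. i \<in> S \<Longrightarrow> c i \<ge> 0"
  shows "(\<Sum>i\<in>S. c i *\<^sub>R (X i - (\<Sum>i\<in>S. c i *\<^sub>R X i) /\<^sub>R (\<Sum>i\<in>S. c i))) = 0"
proof -
  have shift: "(\<Sum>i\<in>S. c i *\<^sub>R (X i - A)) = (\<Sum>i\<in>S. c i *\<^sub>R X i) - (\<Sum>i\<in>S. c i) *\<^sub>R A" for A
    by (simp add: scaleR_diff_right sum_subtractf scaleR_sum_left)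
  show ?thesis
  proof (cases "(\<Sum>i\<in>S. c i) = 0")
    case True
    then show ?thesis using sum_nonneg_eq_0_iff[of S c] assms by simp
  next
    case False
    then show ?thesis by (simp add: shift)
  qed
qed

definition cluster_dev :: "('n::finite \<Rightarrow> 'k) \<Rightarrow> ('n \<Rightarrow> real) \<Rightarrow> ('a::real_vector)^'n \<Rightarrow> 'n \<Rightarrow> 'a" where
  "cluster_dev cl \<gamma> \<Theta> i = \<Theta> $ i - clavg cl \<gamma> \<Theta> (cl i)"

definition global_dev :: "('n::finite \<Rightarrow> 'k) \<Rightarrow> ('k \<Rightarrow> real) \<Rightarrow> ('n \<Rightarrow> real) \<Rightarrow> ('a::real_vector)^'n \<Rightarrow> 'n \<Rightarrow> 'a" where
  "global_dev cl \<alpha> \<gamma> \<Theta> i = \<Theta> $ i - gavg cl \<alpha> \<gamma> \<Theta>"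

lemma linear_cluster_dev: "linear (\<lambda>\<Theta>. cluster_dev cl \<gamma> \<Theta> i)"
  by (rule linearI)
    (simp_all add: cluster_dev_def clavg_def scaleR_add_right sum.distrib scaleR_sum_right mult_ac algebra_simps)

lemma linear_global_dev: "linear (\<lambda>\<Theta>. global_dev cl \<alpha> \<gamma> \<Theta> i)"
  by (rule linearI)
    (simp_all add: global_dev_def gavg_def scaleR_add_right sum.distrib scaleR_sum_right mult_ac algebra_simps)

lemma cluster_dev_diff: "cluster_dev cl \<gamma> (\<Theta> - X) i = cluster_dev cl \<gamma> \<Theta> i - cluster_dev cl \<gamma> X i"
  using linear_diff[OF linear_cluster_dev] .

lemma global_dev_diff: "global_dev cl \<alpha> \<gamma> (\<Theta> - X) i = global_dev cl \<alpha> \<gamma> \<Theta> i - global_dev cl \<alpha> \<gamma> X i"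
  using linear_diff[OF linear_global_dev] .

lemma sum_cluster_dev_inner_eq_0:
  fixes cl :: "'n::finite \<Rightarrow> 'k::finite" and X :: "('a::real_inner)^'n"
  assumes "\<And>i. \<gamma> i > 0"
  shows "(\<Sum>i\<in>UNIV. (c (cl i) * \<gamma> i) * (cluster_dev cl \<gamma> X i \<bullet> w (cl i))) = 0"
proof -
  have "(\<Sum>i\<in>{i. cl i = j}. (c (cl i) * \<gamma> i) * (cluster_dev cl \<gamma> X i \<bullet> w (cl i))) = 0" for j
  proof -
    have "(\<Sum>i\<in>{i. cl i = j}. (c (cl i) * \<gamma> i) * (cluster_dev cl \<gamma> X i \<bullet> w (cl i)))
        = c j * ((\<Sum>i\<in>{i. cl i = j}. \<gamma> i *\<^sub>R (X $ i - clavg cl \<gamma> X j)) \<bullet> w j)"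
      by (simp add: cluster_dev_def sum_distrib_left inner_sum_left mult.assoc)
    also have "(\<Sum>i\<in>{i. cl i = j}. \<gamma> i *\<^sub>R (X $ i - clavg cl \<gamma> X j)) = 0"
      unfolding clavg_def by (rule sum_scaleR_deviation_wavg_eq_0) (auto simp: less_imp_le assms)
    finally show ?thesis by simp
  qed
  then show ?thesis
    using sum.group[of UNIV UNIV cl "\<lambda>i. (c (cl i) * \<gamma> i) * (cluster_dev cl \<gamma> X i \<bullet> w (cl i))"] by simp
qed

lemma sum_global_dev_inner_eq_0:
  fixes cl :: "'n::finite \<Rightarrow> 'k::finite" and X :: "('a::real_inner)^'n"
  assumes "\<And>i. \<gamma> i > 0" and "\<And>j. \<alpha> j \<ge> 0"
  shows "(\<Sum>i\<in>UNIV. (\<alpha> (cl i) * \<gamma> i) * (global_dev cl \<alpha> \<gamma> X i \<bullet> w)) = 0"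
proof -
  have "(\<Sum>i\<in>UNIV. (\<alpha> (cl i) * \<gamma> i) *\<^sub>R global_dev cl \<alpha> \<gamma> X i) = 0"
    unfolding global_dev_def gavg_def
    by (rule sum_scaleR_deviation_wavg_eq_0) (auto intro: mult_nonneg_nonneg assms less_imp_le)
  then have "(\<Sum>i\<in>UNIV. (\<alpha> (cl i) * \<gamma> i) *\<^sub>R global_dev cl \<alpha> \<gamma> X i) \<bullet> w = 0" by simp
  then show ?thesis by (simp add: inner_sum_left)
qed

definition Fgrad :: "('n::finite \<Rightarrow> nat) \<Rightarrow> ('n \<Rightarrow> nat \<Rightarrow> 'a \<Rightarrow> 'a) \<Rightarrow> ('n \<Rightarrow> 'k)
    \<Rightarrow> ('k \<Rightarrow> real) \<Rightarrow> ('n \<Rightarrow> real) \<Rightarrow> ('a::real_vector)^'n \<Rightarrow> 'a^'n" where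
  "Fgrad N gt cl \<alpha> \<gamma> X = (\<chi> i. loc_grad N gt i (X $ i)
      + (\<alpha> (cl i) * \<gamma> i) *\<^sub>R global_dev cl \<alpha> \<gamma> X i
      + ((1 - \<alpha> (cl i)) * \<gamma> i) *\<^sub>R cluster_dev cl \<gamma> X i)"

lemma Fobj_eq:
  "Fobj N ft cl \<alpha> \<gamma> \<Theta> = (\<Sum>i\<in>UNIV. loc_f N ft i (\<Theta> $ i)
      + (1 - \<alpha> (cl i)) * \<gamma> i / 2 * (norm (cluster_dev cl \<gamma> \<Theta> i))\<^sup>2
      + \<alpha> (cl i) * \<gamma> i / 2 * (norm (global_dev cl \<alpha> \<gamma> \<Theta> i))\<^sup>2)"
  by (simp add: Fobj_def cluster_dev_def global_dev_def)

text \<open>The projections of the averages drop out of the gradient because deviations from a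
  weighted average have weighted sum zero.\<close>
lemma inner_Fgrad:
  fixes cl :: "'n::finite \<Rightarrow> 'k::finite" and X H :: "('a::real_inner)^'n"
  assumes "\<And>i. \<gamma> i > 0" and "\<And>j. \<alpha> j \<ge> 0"
  shows "Fgrad N gt cl \<alpha> \<gamma> X \<bullet> H = (\<Sum>i\<in>UNIV. loc_grad N gt i (X $ i) \<bullet> H $ i
      + (1 - \<alpha> (cl i)) * \<gamma> i * (cluster_dev cl \<gamma> X i \<bullet> cluster_dev cl \<gamma> H i)
      + \<alpha> (cl i) * \<gamma> i * (global_dev cl \<alpha> \<gamma> X i \<bullet> global_dev cl \<alpha> \<gamma> H i))"
proof -
  have cluster: "(\<Sum>i\<in>UNIV. (1 - \<alpha> (cl i)) * \<gamma> i * (cluster_dev cl \<gamma> X i \<bullet> H $ i))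
      = (\<Sum>i\<in>UNIV. (1 - \<alpha> (cl i)) * \<gamma> i * (cluster_dev cl \<gamma> X i \<bullet> cluster_dev cl \<gamma> H i))"
    using sum_cluster_dev_inner_eq_0[OF assms(1), where c = "\<lambda>j. 1 - \<alpha> j" and X = X and w = "clavg cl \<gamma> H"]
    by (simp add: cluster_dev_def[of _ _ H] inner_diff_right right_diff_distrib sum_subtractf)
  have global: "(\<Sum>i\<in>UNIV. \<alpha> (cl i) * \<gamma> i * (global_dev cl \<alpha> \<gamma> X i \<bullet> H $ i))
      = (\<Sum>i\<in>UNIV. \<alpha> (cl i) * \<gamma> i * (global_dev cl \<alpha> \<gamma> X i \<bullet> global_dev cl \<alpha> \<gamma> H i))"
    using sum_global_dev_inner_eq_0[OF assms, where X = X and w = "gavg cl \<alpha> \<gamma> H"]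
    by (simp add: global_dev_def[of _ _ _ H] inner_diff_right right_diff_distrib sum_subtractf)
  have "Fgrad N gt cl \<alpha> \<gamma> X \<bullet> H = (\<Sum>i\<in>UNIV. loc_grad N gt i (X $ i) \<bullet> H $ i)
      + (\<Sum>i\<in>UNIV. \<alpha> (cl i) * \<gamma> i * (global_dev cl \<alpha> \<gamma> X i \<bullet> H $ i))
      + (\<Sum>i\<in>UNIV. (1 - \<alpha> (cl i)) * \<gamma> i * (cluster_dev cl \<gamma> X i \<bullet> H $ i))"
    by (simp add: Fgrad_def inner_vec_def inner_add_left sum.distrib)
  then show ?thesis
    by (simp add: cluster global sum.distrib add_ac)
qed

lemma has_derivative_loc_f:
  fixes ft :: "'n \<Rightarrow> nat \<Rightarrow> 'a::real_inner \<Rightarrow> real"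
  assumes "\<And>l x. l \<in> {1..N i} \<Longrightarrow> (ft i l has_derivative (\<lambda>h. gt i l x \<bullet> h)) (at x)"
  shows "(loc_f N ft i has_derivative (\<lambda>h. loc_grad N gt i x \<bullet> h)) (at x)"
proof -
  have "((\<lambda>x. (\<Sum>l = 1..N i. ft i l x) * inverse (real (N i)))
      has_derivative (\<lambda>h. (\<Sum>l = 1..N i. gt i l x \<bullet> h) * inverse (real (N i)))) (at x)"
    by (intro has_derivative_mult_left has_derivative_sum assms)
  then show ?thesis
    unfolding loc_f_def[abs_def] loc_grad_def by (simp add: inner_sum_left divide_inverse mult.commute)
qed

lemma has_derivative_Fobj:
  fixes cl :: "'n::finite \<Rightarrow> 'k::finite" and ft :: "'n \<Rightarrow> nat \<Rightarrow> 'a::euclidean_space \<Rightarrow> real"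
  assumes "\<And>i l x. l \<in> {1..N i} \<Longrightarrow> (ft i l has_derivative (\<lambda>h. gt i l x \<bullet> h)) (at x)"
    and "\<And>i. \<gamma> i > 0" and "\<And>j. \<alpha> j \<ge> 0"
  shows "(Fobj N ft cl \<alpha> \<gamma> has_derivative (\<lambda>H. Fgrad N gt cl \<alpha> \<gamma> X \<bullet> H)) (at X)"
proof -
  have loc: "((\<lambda>\<Theta>::'a^'n. loc_f N ft i (\<Theta> $ i)) has_derivative (\<lambda>H. loc_grad N gt i (X $ i) \<bullet> H $ i)) (at X)" for i
    using has_derivative_compose[OF bounded_linear_imp_has_derivative[OF bounded_linear_vec_nth]
        has_derivative_loc_f[OF assms(1)]] .
  have dev: "((\<lambda>\<Theta>. cluster_dev cl \<gamma> \<Theta> i) has_derivative (\<lambda>H. cluster_dev cl \<gamma> H i)) (at X)"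
    "((\<lambda>\<Theta>. global_dev cl \<alpha> \<gamma> \<Theta> i) has_derivative (\<lambda>H. global_dev cl \<alpha> \<gamma> H i)) (at X)" for i
    by (auto intro!: bounded_linear_imp_has_derivative
        simp: linear_conv_bounded_linear[symmetric] linear_cluster_dev linear_global_dev)
  have "(Fobj N ft cl \<alpha> \<gamma> has_derivative (\<lambda>H. \<Sum>i\<in>UNIV. loc_grad N gt i (X $ i) \<bullet> H $ i
      + (1 - \<alpha> (cl i)) * \<gamma> i / 2 * (cluster_dev cl \<gamma> X i \<bullet> cluster_dev cl \<gamma> H i + cluster_dev cl \<gamma> H i \<bullet> cluster_dev cl \<gamma> X i)
      + \<alpha> (cl i) * \<gamma> i / 2 * (global_dev cl \<alpha> \<gamma> X i \<bullet> global_dev cl \<alpha> \<gamma> H i + global_dev cl \<alpha> \<gamma> H i \<bullet> global_dev cl \<alpha> \<gamma> X i))) (at X)"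
    unfolding Fobj_eq[abs_def] power2_norm_eq_inner
    by (intro has_derivative_sum has_derivative_add has_derivative_mult_right has_derivative_inner loc dev)
  then show ?thesis
    by (simp add: inner_Fgrad[OF assms(2,3)] inner_commute[of "cluster_dev cl \<gamma> _ _" "cluster_dev cl \<gamma> X _"]
        inner_commute[of "global_dev cl \<alpha> \<gamma> _ _" "global_dev cl \<alpha> \<gamma> X _"] mult.assoc)
qed

lemma bregman_loc_f:
  "bregman (loc_f N ft i) (loc_grad N gt i) x y = (\<Sum>m = 1..N i. bregman (ft i m) (gt i m) x y) / real (N i)"
proof -
  have "loc_grad N gt i x \<bullet> (y - x) = (\<Sum>m = 1..N i. gt i m x \<bullet> (y - x)) / real (N i)"
    by (simp add: loc_grad_def inner_sum_left divide_inverse mult.commute)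
  then show ?thesis by (simp add: bregman_def loc_f_def sum_subtractf diff_divide_distrib)
qed

lemma avg_sq_grad_diff_le_bregman_loc_f:
  fixes ft :: "'n \<Rightarrow> nat \<Rightarrow> 'a::euclidean_space \<Rightarrow> real"
  assumes "\<And>l x. l \<in> {1..N i} \<Longrightarrow> (ft i l has_derivative (\<lambda>h. gt i l x \<bullet> h)) (at x)"
    and "\<And>l x y. l \<in> {1..N i} \<Longrightarrow> norm (gt i l x - gt i l y) \<le> Lt * norm (x - y)"
    and "\<And>l x y. l \<in> {1..N i} \<Longrightarrow> bregman (ft i l) (gt i l) x y \<ge> 0"
  shows "(\<Sum>m = 1..N i. (norm (gt i m y - gt i m x))\<^sup>2) / real (N i)
    \<le> 2 * Lt * bregman (loc_f N ft i) (loc_grad N gt i) x y"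
proof -
  have "(\<Sum>m = 1..N i. (norm (gt i m y - gt i m x))\<^sup>2) \<le> (\<Sum>m = 1..N i. 2 * Lt * bregman (ft i m) (gt i m) x y)"
    by (intro sum_mono smooth_convex_grad_diff_sq_le_bregman assms) auto
  then show ?thesis
    unfolding bregman_loc_f by (simp add: divide_right_mono sum_distrib_left[symmetric])
qed

definition client_bregman :: "('n::finite \<Rightarrow> nat) \<Rightarrow> ('n \<Rightarrow> nat \<Rightarrow> 'a \<Rightarrow> real) \<Rightarrow> ('n \<Rightarrow> nat \<Rightarrow> 'a \<Rightarrow> 'a)
    \<Rightarrow> ('n \<Rightarrow> 'k) \<Rightarrow> ('k \<Rightarrow> real) \<Rightarrow> ('n \<Rightarrow> real) \<Rightarrow> ('a::real_inner)^'n \<Rightarrow> 'a^'n \<Rightarrow> 'n \<Rightarrow> real" where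
  "client_bregman N ft gt cl \<alpha> \<gamma> X \<Theta> i =
      bregman (loc_f N ft i) (loc_grad N gt i) (X $ i) (\<Theta> $ i)
      + (1 - \<alpha> (cl i)) * \<gamma> i / 2 * (norm (cluster_dev cl \<gamma> (\<Theta> - X) i))\<^sup>2
      + \<alpha> (cl i) * \<gamma> i / 2 * (norm (global_dev cl \<alpha> \<gamma> (\<Theta> - X) i))\<^sup>2"

lemma bregman_Fobj:
  fixes cl :: "'n::finite \<Rightarrow> 'k::finite" and ft :: "'n \<Rightarrow> nat \<Rightarrow> 'a::euclidean_space \<Rightarrow> real"
  assumes "\<And>i. \<gamma> i > 0" and "\<And>j. \<alpha> j \<ge> 0"
  shows "bregman (Fobj N ft cl \<alpha> \<gamma>) (Fgrad N gt cl \<alpha> \<gamma>) X \<Theta> = (\<Sum>i\<in>UNIV. client_bregman N ft gt cl \<alpha> \<gamma> X \<Theta> i)"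
  unfolding client_bregman_def bregman_def Fobj_eq inner_Fgrad[OF assms] sum_subtractf[symmetric]
proof (rule sum.cong[OF refl])
  fix i
  show "loc_f N ft i (\<Theta> $ i)
      + (1 - \<alpha> (cl i)) * \<gamma> i / 2 * (norm (cluster_dev cl \<gamma> \<Theta> i))\<^sup>2
      + \<alpha> (cl i) * \<gamma> i / 2 * (norm (global_dev cl \<alpha> \<gamma> \<Theta> i))\<^sup>2
      - (loc_f N ft i (X $ i)
      + (1 - \<alpha> (cl i)) * \<gamma> i / 2 * (norm (cluster_dev cl \<gamma> X i))\<^sup>2
      + \<alpha> (cl i) * \<gamma> i / 2 * (norm (global_dev cl \<alpha> \<gamma> X i))\<^sup>2)
      - (loc_grad N gt i (X $ i) \<bullet> (\<Theta> - X) $ i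
      + (1 - \<alpha> (cl i)) * \<gamma> i * (cluster_dev cl \<gamma> X i \<bullet> cluster_dev cl \<gamma> (\<Theta> - X) i)
      + \<alpha> (cl i) * \<gamma> i * (global_dev cl \<alpha> \<gamma> X i \<bullet> global_dev cl \<alpha> \<gamma> (\<Theta> - X) i))
    = loc_f N ft i (\<Theta> $ i) - loc_f N ft i (X $ i) - loc_grad N gt i (X $ i) \<bullet> (\<Theta> $ i - X $ i)
      + (1 - \<alpha> (cl i)) * \<gamma> i / 2 * (norm (cluster_dev cl \<gamma> (\<Theta> - X) i))\<^sup>2
      + \<alpha> (cl i) * \<gamma> i / 2 * (norm (global_dev cl \<alpha> \<gamma> (\<Theta> - X) i))\<^sup>2"
    unfolding cluster_dev_diff global_dev_diff norm_diff_sq_eq by (simp add: field_simps)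
qed

section \<open>Comparison with the constant\<close>

lemma Lconst_ge_global:
  fixes cl :: "'n::finite \<Rightarrow> 'k::finite"
  assumes "0 < p0"
  shows "2 / p0 * (\<alpha> (cl i) * \<gamma> i) \<le> Lconst cl \<alpha> \<gamma> p0 p Lt"
proof -
  have "\<alpha> (cl i) * \<gamma> i \<le> Max ((\<lambda>i'. \<alpha> (cl i) * \<gamma> i') ` {i'. cl i' = cl i})"
    by (rule Max_ge) auto
  also have "\<dots> \<le> Max (range (\<lambda>j. Max ((\<lambda>i. \<alpha> j * \<gamma> i) ` {i. cl i = j})))"
    by (rule Max_ge) auto
  finally have "2 / p0 * (\<alpha> (cl i) * \<gamma> i) \<le> 2 / p0 * Max (range (\<lambda>j. Max ((\<lambda>i. \<alpha> j * \<gamma> i) ` {i. cl i = j})))"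
    using assms by (intro mult_left_mono) auto
  then show ?thesis unfolding Lconst_def by linarith
qed

lemma Lconst_ge_cluster:
  fixes cl :: "'n::finite \<Rightarrow> 'k::finite"
  assumes "\<alpha> (cl i) \<le> 1" and "0 < p0 + 2 * (1 - p0) * p (cl i)"
  shows "2 * (1 - \<alpha> (cl i)) * \<gamma> i / (p0 + 2 * (1 - p0) * p (cl i)) \<le> Lconst cl \<alpha> \<gamma> p0 p Lt"
proof -
  have "\<gamma> i \<le> Max (\<gamma> ` {i'. cl i' = cl i})" by (rule Max_ge) auto
  then have "2 * (1 - \<alpha> (cl i)) * \<gamma> i / (p0 + 2 * (1 - p0) * p (cl i))
      \<le> 2 * (1 - \<alpha> (cl i)) * Max (\<gamma> ` {i'. cl i' = cl i}) / (p0 + 2 * (1 - p0) * p (cl i))"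
    using assms by (intro divide_right_mono mult_left_mono) auto
  also have "\<dots> \<le> Max (range (\<lambda>j. 2 * (1 - \<alpha> j) * Max (\<gamma> ` {i. cl i = j}) / (p0 + 2 * (1 - p0) * p j)))"
    by (rule Max_ge) auto
  finally show ?thesis unfolding Lconst_def by linarith
qed

lemma Lconst_ge_local:
  fixes cl :: "'n::finite \<Rightarrow> 'k::finite"
  assumes "0 \<le> Lt" and "p0 < 1"
  shows "Lt / ((1 - p0) * (1 - p j)) \<le> Lconst cl \<alpha> \<gamma> p0 p Lt"
proof -
  have "Lt / (1 - p0) * (1 / (1 - p j)) \<le> Lt / (1 - p0) * Max (range (\<lambda>j. 1 / (1 - p j)))"
    using assms by (intro mult_left_mono Max_ge) auto
  moreover have "Lt / ((1 - p0) * (1 - p j)) = Lt / (1 - p0) * (1 / (1 - p j))" by simp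
  ultimately show ?thesis unfolding Lconst_def by linarith
qed

lemma global_coeff_le:
  fixes p0 a L :: real
  assumes "0 < p0" and "0 \<le> a" and "2 / p0 * a \<le> L"
  shows "p0 * (a / p0)\<^sup>2 \<le> L * a"
proof -
  have "a / p0 \<le> 2 / p0 * a" using assms(1,2) by (simp add: divide_right_mono)
  with assms(3) have "a / p0 \<le> L" by linarith
  then have "a * (a / p0) \<le> a * L" using assms(2) by (rule mult_left_mono)
  then show ?thesis using assms(1) by (simp add: power2_eq_square mult.commute)
qed

lemma cluster_coeff_le:
  fixes p0 a g L :: real
  assumes "0 < p0" "p0 < 1" "0 < p j" and "0 \<le> a * g"
    and "2 * a * g / (p0 + 2 * (1 - p0) * p j) \<le> L"
  shows "(1 - p0) * p j * (g * (1 - tau p0 p j) * a / ((1 - p0) * p j))\<^sup>2 \<le> L * (a * g)"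
proof -
  define s where "s = p0 + 2 * (1 - p0) * p j"
  have s: "0 < s" "2 * (1 - p0) * p j \<le> s" unfolding s_def using assms by (auto intro: add_pos_nonneg)
  have "tau p0 p j = p0 / s" by (simp add: tau_def s_def)
  then have "1 - tau p0 p j = (s - p0) / s"
    using s by (simp add: field_simps)
  also have "s - p0 = 2 * (1 - p0) * p j" by (simp add: s_def)
  finally have one_minus_tau: "1 - tau p0 p j = 2 * (1 - p0) * p j / s" .
  have "g * (1 - tau p0 p j) * a / ((1 - p0) * p j) = 2 * a * g / s"
    unfolding one_minus_tau using assms s by (simp add: field_simps)
  then have "(1 - p0) * p j * (g * (1 - tau p0 p j) * a / ((1 - p0) * p j))\<^sup>2
      = (a * g) * (2 * a * g / s) * (2 * (1 - p0) * p j / s)"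
    by (simp add: power2_eq_square)
  also have "\<dots> \<le> (a * g) * L * 1"
  proof (rule mult_mono)
    have bound: "2 * a * g / s \<le> L" using assms(5) by (simp add: s_def)
    then show "(a * g) * (2 * a * g / s) \<le> (a * g) * L" using assms(4) by (rule mult_left_mono)
    have "0 \<le> 2 * a * g / s" using assms(4) s by simp
    with bound assms(4) show "0 \<le> (a * g) * L" by (meson mult_nonneg_nonneg order_trans)
    show "2 * (1 - p0) * p j / s \<le> 1" and "0 \<le> 2 * (1 - p0) * p j / s"
      using assms s by auto
  qed
  finally show ?thesis by (simp add: mult_ac)
qed

lemma local_coeff_le:
  fixes p0 q V D Lt L :: real
  assumes "p0 < 1" "q < 1" and "V \<le> 2 * Lt * D" "0 \<le> D" and "Lt / ((1 - p0) * (1 - q)) \<le> L"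
  shows "(1 - p0) * ((1 - q) * ((1 / ((1 - p0) * (1 - q)))\<^sup>2 * V)) \<le> 2 * L * D"
proof -
  have "(1 - p0) * ((1 - q) * ((1 / ((1 - p0) * (1 - q)))\<^sup>2 * V)) = V / ((1 - p0) * (1 - q))"
    using assms(1,2) by (simp add: power2_eq_square)
  also have "\<dots> \<le> 2 * Lt * D / ((1 - p0) * (1 - q))"
    using assms(1-3) by (simp add: divide_right_mono)
  also have "\<dots> = 2 * (Lt / ((1 - p0) * (1 - q))) * D" by simp
  also have "\<dots> \<le> 2 * L * D" using mult_right_mono[OF assms(5,4)] by simp
  finally show ?thesis .
qed

section \<open>The variance bound\<close>

lemma gest_sub_Fgrad_nth:
  "(gest N gt cl \<alpha> \<gamma> p0 p \<Theta> X \<xi>0 \<xi> l - Fgrad N gt cl \<alpha> \<gamma> X) $ i =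
    (if \<xi>0 then (\<gamma> i * \<alpha> (cl i) / p0) *\<^sub>R global_dev cl \<alpha> \<gamma> (\<Theta> - X) i
     else if \<xi> (cl i) then
       (\<gamma> i * (1 - tau p0 p (cl i)) * (1 - \<alpha> (cl i)) / ((1 - p0) * p (cl i))) *\<^sub>R cluster_dev cl \<gamma> (\<Theta> - X) i
     else (1 / ((1 - p0) * (1 - p (cl i)))) *\<^sub>R (gt i (l i) (\<Theta> $ i) - gt i (l i) (X $ i)))"
  unfolding gest_def Fgrad_def cluster_dev_def[symmetric] global_dev_def[symmetric]
  by (simp add: cluster_dev_diff global_dev_diff)

lemma norm_vec_power2: "(norm (v::('a::real_normed_vector)^'n::finite))\<^sup>2 = (\<Sum>i\<in>UNIV. (norm (v $ i))\<^sup>2)"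
  unfolding norm_vec_def L2_set_def by (simp add: sum_nonneg)

lemma expect_sq_error_client:
  fixes cl :: "'n::finite \<Rightarrow> 'k::finite" and X :: "('a::real_normed_vector)^'n"
  assumes N_pos: "\<And>i. N i \<ge> 1"
  shows "expect N p0 p (\<lambda>\<xi>0 \<xi> l. (norm ((gest N gt cl \<alpha> \<gamma> p0 p \<Theta> X \<xi>0 \<xi> l - Fgrad N gt cl \<alpha> \<gamma> X) $ i))\<^sup>2)
    = p0 * ((\<gamma> i * \<alpha> (cl i) / p0)\<^sup>2 * (norm (global_dev cl \<alpha> \<gamma> (\<Theta> - X) i))\<^sup>2)
      + (1 - p0) * (p (cl i) * ((\<gamma> i * (1 - tau p0 p (cl i)) * (1 - \<alpha> (cl i)) / ((1 - p0) * p (cl i)))\<^sup>2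
            * (norm (cluster_dev cl \<gamma> (\<Theta> - X) i))\<^sup>2)
        + (1 - p (cl i)) * ((1 / ((1 - p0) * (1 - p (cl i))))\<^sup>2
            * ((\<Sum>m = 1..N i. (norm (gt i m (\<Theta> $ i) - gt i m (X $ i)))\<^sup>2) / real (N i))))"
proof -
  define j where "j = cl i"
  define c where "c = 1 / ((1 - p0) * (1 - p j))"
  have "(\<lambda>\<xi>0 \<xi> l. (norm ((gest N gt cl \<alpha> \<gamma> p0 p \<Theta> X \<xi>0 \<xi> l - Fgrad N gt cl \<alpha> \<gamma> X) $ i))\<^sup>2)
    = (\<lambda>\<xi>0 \<xi> l. if \<xi>0 then (\<gamma> i * \<alpha> j / p0)\<^sup>2 * (norm (global_dev cl \<alpha> \<gamma> (\<Theta> - X) i))\<^sup>2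
        else if \<xi> j then (\<gamma> i * (1 - tau p0 p j) * (1 - \<alpha> j) / ((1 - p0) * p j))\<^sup>2 * (norm (cluster_dev cl \<gamma> (\<Theta> - X) i))\<^sup>2
        else c\<^sup>2 * (norm (gt i (l i) (\<Theta> $ i) - gt i (l i) (X $ i)))\<^sup>2)"
    unfolding gest_sub_Fgrad_nth by (simp add: fun_eq_iff j_def c_def power_mult_distrib power_divide power2_abs)
  then show ?thesis
    using expect_client_cases[OF N_pos, where i = i and j = j
        and c = "\<lambda>m. c\<^sup>2 * (norm (gt i m (\<Theta> $ i) - gt i m (X $ i)))\<^sup>2"]
    by (simp add: j_def c_def sum_distrib_left)
qed

lemma expect_sq_error_client_le:
  fixes cl :: "'n::finite \<Rightarrow> 'k::finite" and ft :: "'n \<Rightarrow> nat \<Rightarrow> 'a::euclidean_space \<Rightarrow> real"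
  assumes N_pos: "\<And>i. N i \<ge> 1"
    and grad: "\<And>l x. l \<in> {1..N i} \<Longrightarrow> (ft i l has_derivative (\<lambda>h. gt i l x \<bullet> h)) (at x)"
    and smooth: "\<And>l x y. l \<in> {1..N i} \<Longrightarrow> norm (gt i l x - gt i l y) \<le> Lt * norm (x - y)"
    and convex: "\<And>l x y. l \<in> {1..N i} \<Longrightarrow> bregman (ft i l) (gt i l) x y \<ge> 0"
    and \<gamma>: "\<gamma> i > 0" and \<alpha>: "0 \<le> \<alpha> (cl i)" "\<alpha> (cl i) \<le> 1"
    and p0: "0 < p0" "p0 < 1" and p: "0 < p (cl i)" "p (cl i) < 1"
  shows "expect N p0 p (\<lambda>\<xi>0 \<xi> l. (norm ((gest N gt cl \<alpha> \<gamma> p0 p \<Theta> X \<xi>0 \<xi> l - Fgrad N gt cl \<alpha> \<gamma> X) $ i))\<^sup>2)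
    \<le> 2 * Lconst cl \<alpha> \<gamma> p0 p Lt * client_bregman N ft gt cl \<alpha> \<gamma> X \<Theta> i"
proof -
  define L where "L = Lconst cl \<alpha> \<gamma> p0 p Lt"
  define j where "j = cl i"
  define A where "A = (norm (global_dev cl \<alpha> \<gamma> (\<Theta> - X) i))\<^sup>2"
  define B where "B = (norm (cluster_dev cl \<gamma> (\<Theta> - X) i))\<^sup>2"
  define D where "D = bregman (loc_f N ft i) (loc_grad N gt i) (X $ i) (\<Theta> $ i)"
  define V where "V = (\<Sum>m = 1..N i. (norm (gt i m (\<Theta> $ i) - gt i m (X $ i)))\<^sup>2) / real (N i)"
  have "0 \<le> A" "0 \<le> B" by (simp_all add: A_def B_def)
  have "0 \<le> D" unfolding D_def bregman_loc_f using convex by (auto intro!: sum_nonneg divide_nonneg_nonneg)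
  have "p0 * ((\<alpha> j * \<gamma> i) / p0)\<^sup>2 \<le> L * (\<alpha> j * \<gamma> i)"
    using \<alpha> \<gamma> Lconst_ge_global[OF p0(1)] by (intro global_coeff_le p0) (auto simp: L_def j_def)
  from mult_right_mono[OF this \<open>0 \<le> A\<close>]
  have global: "p0 * ((\<gamma> i * \<alpha> j / p0)\<^sup>2 * A) \<le> L * (\<alpha> j * \<gamma> i) * A"
    by (simp add: mult_ac)
  have "2 * (1 - \<alpha> j) * \<gamma> i / (p0 + 2 * (1 - p0) * p j) \<le> L"
    unfolding L_def j_def using \<alpha> p0 p by (intro Lconst_ge_cluster) (simp_all add: add_pos_nonneg)
  then have "(1 - p0) * p j * (\<gamma> i * (1 - tau p0 p j) * (1 - \<alpha> j) / ((1 - p0) * p j))\<^sup>2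
      \<le> L * ((1 - \<alpha> j) * \<gamma> i)"
    using \<alpha> \<gamma> p by (intro cluster_coeff_le p0) (auto simp: j_def)
  from mult_right_mono[OF this \<open>0 \<le> B\<close>]
  have cluster: "(1 - p0) * (p j * ((\<gamma> i * (1 - tau p0 p j) * (1 - \<alpha> j) / ((1 - p0) * p j))\<^sup>2 * B))
      \<le> L * ((1 - \<alpha> j) * \<gamma> i) * B"
    by (simp add: mult_ac)
  have "V \<le> 2 * Lt * D"
    unfolding V_def D_def by (rule avg_sq_grad_diff_le_bregman_loc_f) (fact grad smooth convex)+
  moreover have "0 \<le> Lt" using lipschitz_const_nonneg[OF smooth] N_pos[of i] by auto
  ultimately have local: "(1 - p0) * ((1 - p j) * ((1 / ((1 - p0) * (1 - p j)))\<^sup>2 * V)) \<le> 2 * L * D"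
    using \<open>0 \<le> D\<close> p0 p Lconst_ge_local by (intro local_coeff_le) (auto simp: L_def j_def)
  have "expect N p0 p (\<lambda>\<xi>0 \<xi> l. (norm ((gest N gt cl \<alpha> \<gamma> p0 p \<Theta> X \<xi>0 \<xi> l - Fgrad N gt cl \<alpha> \<gamma> X) $ i))\<^sup>2)
      = p0 * ((\<gamma> i * \<alpha> j / p0)\<^sup>2 * A)
        + (1 - p0) * (p j * ((\<gamma> i * (1 - tau p0 p j) * (1 - \<alpha> j) / ((1 - p0) * p j))\<^sup>2 * B))
        + (1 - p0) * ((1 - p j) * ((1 / ((1 - p0) * (1 - p j)))\<^sup>2 * V))"
    unfolding j_def A_def B_def V_def expect_sq_error_client[OF N_pos] by (simp add: distrib_left)
  also have "\<dots> \<le> L * (\<alpha> j * \<gamma> i) * A + L * ((1 - \<alpha> j) * \<gamma> i) * B + 2 * L * D"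
    using global cluster local by linarith
  also have "\<dots> = 2 * L * (D + (1 - \<alpha> j) * \<gamma> i / 2 * B + \<alpha> j * \<gamma> i / 2 * A)"
    by (simp add: field_simps)
  finally show ?thesis by (simp add: client_bregman_def L_def j_def A_def B_def D_def)
qed

theorem mainTheorem10:
  fixes cl :: "'n::finite \<Rightarrow> 'k::finite"
    and N :: "'n \<Rightarrow> nat"
    and ft :: "'n \<Rightarrow> nat \<Rightarrow> 'a::euclidean_space \<Rightarrow> real"
    and gt :: "'n \<Rightarrow> nat \<Rightarrow> 'a \<Rightarrow> 'a"
    and Lt \<mu> p0 :: real
    and \<alpha> p :: "'k \<Rightarrow> real"
    and \<gamma> :: "'n \<Rightarrow> real"
    and \<Theta> X gradF :: "'a^'n"
  assumes clusters_nonempty: "surj cl"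
    and N_pos: "\<And>i. N i \<ge> 1"
    and grad: "\<And>i l x. l \<in> {1..N i} \<Longrightarrow> (ft i l has_derivative (\<lambda>h. gt i l x \<bullet> h)) (at x)"
    and smooth: "\<And>i l x y. l \<in> {1..N i} \<Longrightarrow> norm (gt i l x - gt i l y) \<le> Lt * norm (x - y)"
    and mu_pos: "\<mu> > 0"
    and strongly_convex: "\<And>i l x y. l \<in> {1..N i} \<Longrightarrow>
          ft i l y \<ge> ft i l x + gt i l x \<bullet> (y - x) + \<mu> / 2 * (norm (y - x))\<^sup>2"
    and gamma_pos: "\<And>i. \<gamma> i > 0"
    and alpha_range: "\<And>j. 0 \<le> \<alpha> j \<and> \<alpha> j \<le> 1"
    and alpha_nonzero: "\<exists>j. \<alpha> j \<noteq> 0"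
    and p0_range: "0 < p0" "p0 < 1"
    and p_range: "\<And>j. 0 < p j \<and> p j < 1"
    and gradF: "(Fobj N ft cl \<alpha> \<gamma> has_derivative (\<lambda>H. gradF \<bullet> H)) (at X)"
  shows "expect N p0 p (\<lambda>\<xi>0 \<xi> l. (norm (gest N gt cl \<alpha> \<gamma> p0 p \<Theta> X \<xi>0 \<xi> l - gradF))\<^sup>2)
         \<le> 2 * Lconst cl \<alpha> \<gamma> p0 p Lt *
           (Fobj N ft cl \<alpha> \<gamma> \<Theta> - Fobj N ft cl \<alpha> \<gamma> X - gradF \<bullet> (\<Theta> - X))"
proof -
  have \<alpha>: "\<And>j. 0 \<le> \<alpha> j" "\<And>j. \<alpha> j \<le> 1" using alpha_range by auto
  \<comment> \<open>Strong convexity is used only as convexity.\<close>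
  have convex: "\<And>i l x y. l \<in> {1..N i} \<Longrightarrow> bregman (ft i l) (gt i l) x y \<ge> 0"
  proof -
    fix i l and x y :: 'a assume "l \<in> {1..N i}"
    moreover have "0 \<le> \<mu> / 2 * (norm (y - x))\<^sup>2" using mu_pos by simp
    ultimately show "bregman (ft i l) (gt i l) x y \<ge> 0"
      unfolding bregman_def using strongly_convex[of l i x y] by linarith
  qed
  have gradF_eq: "gradF = Fgrad N gt cl \<alpha> \<gamma> X"
  proof -
    have "(\<lambda>H. gradF \<bullet> H) = (\<lambda>H. Fgrad N gt cl \<alpha> \<gamma> X \<bullet> H)"
      by (rule has_derivative_unique[OF gradF has_derivative_Fobj[OF grad gamma_pos \<alpha>(1)]])
    then show ?thesis by (simp add: fun_eq_iff vector_eq_rdot)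
  qed
  have "expect N p0 p (\<lambda>\<xi>0 \<xi> l. (norm (gest N gt cl \<alpha> \<gamma> p0 p \<Theta> X \<xi>0 \<xi> l - gradF))\<^sup>2)
      = (\<Sum>i\<in>UNIV. expect N p0 p (\<lambda>\<xi>0 \<xi> l.
          (norm ((gest N gt cl \<alpha> \<gamma> p0 p \<Theta> X \<xi>0 \<xi> l - Fgrad N gt cl \<alpha> \<gamma> X) $ i))\<^sup>2))"
    unfolding gradF_eq norm_vec_power2 by (rule expect_sum)
  also have "\<dots> \<le> (\<Sum>i\<in>UNIV. 2 * Lconst cl \<alpha> \<gamma> p0 p Lt * client_bregman N ft gt cl \<alpha> \<gamma> X \<Theta> i)"
    using \<alpha> p0_range p_range
    by (intro sum_mono expect_sq_error_client_le[OF N_pos grad smooth convex gamma_pos]) auto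
  also have "\<dots> = 2 * Lconst cl \<alpha> \<gamma> p0 p Lt * bregman (Fobj N ft cl \<alpha> \<gamma>) (Fgrad N gt cl \<alpha> \<gamma>) X \<Theta>"
    by (simp add: bregman_Fobj[OF gamma_pos \<alpha>(1)] sum_distrib_left)
  finally show ?thesis by (simp add: gradF_eq bregman_def)
qed

end
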